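(* $\mathcal{T}$ is functional if and only if (1) for each relevant pair $\langle m_1,m_2\rangle$ of a state $p\in Q^2$, $\nu(p)$ is a most general equalizer (mge) for $\langle m_1,m_2\rangle$, and (2) for each final and accessible state $f\in F\times F$ of $\mathcal{A}^2$ we have $\nu(f)=\langle e,e\rangle$.
   Context: Let $\mathcal{M}=\langle M,\circ,e\rangle$ be a monoid. A tuple $\langle m_1,\dots,m_n\rangle\in M^n$ is equalizable if there is $\langle x_1,\dots,x_n\rangle\in M^n$ (an equalizer) with $m_1x_1=\dots=m_nx_n$; an equalizer $\langle x_1,\dots,x_n\rangle$ is a most general equalizer (mge) if every equalizer has the form $\langle x_1x,\dots,x_nx\rangle$ for some $x\in M$. $\mathcal{M}$ is an mge monoid if it has right cancellation ($ac=bc\Rightarrow a=b$) and every equalizable pair has an mge. Let $\eta:M^2\to M^2$ be a function that returns an mge $\eta(m,m')$ for each equalizable pair $\langle m,m'\rangle$. Let $\mathcal{T}=\langle \Sigma^*\times\mathcal{M},Q,I,F,\Delta\rangle$ be a trimmed (every state accessible and co-accessible) monoidal finite-state transducer with output in the mge monoid $\mathcal{M}$, where $\Delta\subseteq Q\times((\Sigma\cup\{\varepsilon\})\times M)\times Q$ and $\Delta^*$ is its generalized transition relation; $\mathcal{T}$ is functional if its accepted relation $L(\mathcal{T})\subseteq\Sigma^*\times M$ is a function. Let $\mathcal{A}^2=\langle \mathcal{M}\times\mathcal{M},Q\times Q,I\times I,F\times F,\Delta_2\rangle$ be a squared output automaton for $\mathcal{T}$, i.e. $\Delta_2$ is finite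 and $\langle\langle p_1,p_2\rangle,\langle m,n\rangle,\langle q_1,q_2\rangle\rangle\in\Delta_2^*$ iff there is $u\in\Sigma^*$ with $\langle p_1,\langle u,m\rangle,q_1\rangle\in\Delta^*$ and $\langle p_2,\langle u,n\rangle,q_2\rangle\in\Delta^*$. For a state $\langle q_1,q_2\rangle$ lying on a successful path of $\mathcal{A}^2$, a pair $\langle m_1,m_2\rangle$ is a relevant pair for $\langle q_1,q_2\rangle$ if $\langle\langle i_1,i_2\rangle,\langle m_1,m_2\rangle,\langle q_1,q_2\rangle\rangle\in\Delta_2^*$ for some $\langle i_1,i_2\rangle\in I\times I$. Let $\langle\rho,\nu\rangle$ be a valuation of $\mathcal{A}^2$: $\rho,\nu:Q^2\to M^2$ are partial functions where $\rho(q)$ is some chosen relevant pair for $q$ if one exists (undefined otherwise), with $\rho(q)=\langle e,e\rangle$ for $q\in I^2$ having a relevant pair; and $\nu(q)=\langle e,e\rangle$ if $\rho(q)$ is defined and of the form $\langle m,m\rangle$, $\nu(q)=\eta(\rho(q))$ if $\rho(q)$ is defined and equalizable, and $\nu(q)$ undefined otherwise. *)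

theory Defs
  imports Main
begin

text \<open>The monoid M is the carrier type of a type of class monoid_mult
  (operation *, neutral element 1 = e).\<close>

definition right_cancel :: "('m::monoid_mult) itself \<Rightarrow> bool" where
  "right_cancel _ \<longleftrightarrow> (\<forall>a b c :: 'm. a * c = b * c \<longrightarrow> a = b)"

definition is_equalizer :: "'m::monoid_mult \<times> 'm \<Rightarrow> 'm \<times> 'm \<Rightarrow> bool" where
  "is_equalizer mm xx \<longleftrightarrow> fst mm * fst xx = snd mm * snd xx"

definition equalizable :: "'m::monoid_mult \<times> 'm \<Rightarrow> bool" where
  "equalizable mm \<longleftrightarrow> (\<exists>xx. is_equalizer mm xx)"

definition is_mge :: "'m::monoid_mult \<times> 'm \<Rightarrow> 'm \<times> 'm \<Rightarrow> bool" where
  "is_mge mm xx \<longleftrightarrow> is_equalizer mm xx \<and>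
     (\<forall>yy. is_equalizer mm yy \<longrightarrow> (\<exists>x. fst yy = fst xx * x \<and> snd yy = snd xx * x))"

definition mge_monoid :: "('m::monoid_mult) itself \<Rightarrow> bool" where
  "mge_monoid T \<longleftrightarrow> right_cancel T \<and>
     (\<forall>mm :: 'm \<times> 'm. equalizable mm \<longrightarrow> (\<exists>xx. is_mge mm xx))"

text \<open>Input letters: None encodes epsilon.\<close>
definition word_of :: "'s option \<Rightarrow> 's list" where
  "word_of a = (case a of None \<Rightarrow> [] | Some x \<Rightarrow> [x])"

inductive_set trans_star ::
  "'q set \<Rightarrow> ('q \<times> ('s option \<times> 'm::monoid_mult) \<times> 'q) set \<Rightarrow> ('q \<times> ('s list \<times> 'm) \<times> 'q) set"
  for Q \<Delta> where
  refl: "q \<in> Q \<Longrightarrow> (q, ([], 1), q) \<in> trans_star Q \<Delta>"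
| step: "(p, (u, m), q) \<in> trans_star Q \<Delta> \<Longrightarrow> (q, (a, n), r) \<in> \<Delta> \<Longrightarrow>
         (p, (u @ word_of a, m * n), r) \<in> trans_star Q \<Delta>"

inductive_set trans_star2 ::
  "'p set \<Rightarrow> ('p \<times> ('m::monoid_mult \<times> 'm) \<times> 'p) set \<Rightarrow> ('p \<times> ('m \<times> 'm) \<times> 'p) set"
  for Q2 \<Delta>2 where
  refl: "q \<in> Q2 \<Longrightarrow> (q, (1, 1), q) \<in> trans_star2 Q2 \<Delta>2"
| step: "(p, (m1, m2), q) \<in> trans_star2 Q2 \<Delta>2 \<Longrightarrow> (q, (n1, n2), r) \<in> \<Delta>2 \<Longrightarrow>
         (p, (m1 * n1, m2 * n2), r) \<in> trans_star2 Q2 \<Delta>2"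

definition monoidal_fst ::
  "'q set \<Rightarrow> 'q set \<Rightarrow> 'q set \<Rightarrow> ('q \<times> ('s option \<times> 'm::monoid_mult) \<times> 'q) set \<Rightarrow> bool" where
  "monoidal_fst Q I F \<Delta> \<longleftrightarrow> finite Q \<and> finite \<Delta> \<and> I \<subseteq> Q \<and> F \<subseteq> Q \<and>
     \<Delta> \<subseteq> Q \<times> (UNIV \<times> UNIV) \<times> Q"

definition trimmed ::
  "'q set \<Rightarrow> 'q set \<Rightarrow> 'q set \<Rightarrow> ('q \<times> ('s option \<times> 'm::monoid_mult) \<times> 'q) set \<Rightarrow> bool" where
  "trimmed Q I F \<Delta> \<longleftrightarrow> (\<forall>q\<in>Q.
     (\<exists>i\<in>I. \<exists>u m. (i, (u, m), q) \<in> trans_star Q \<Delta>) \<and>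
     (\<exists>f\<in>F. \<exists>u m. (q, (u, m), f) \<in> trans_star Q \<Delta>))"

definition lang ::
  "'q set \<Rightarrow> 'q set \<Rightarrow> 'q set \<Rightarrow> ('q \<times> ('s option \<times> 'm::monoid_mult) \<times> 'q) set \<Rightarrow> ('s list \<times> 'm) set" where
  "lang Q I F \<Delta> = {(u, m). \<exists>i\<in>I. \<exists>f\<in>F. (i, (u, m), f) \<in> trans_star Q \<Delta>}"

definition functional ::
  "'q set \<Rightarrow> 'q set \<Rightarrow> 'q set \<Rightarrow> ('q \<times> ('s option \<times> 'm::monoid_mult) \<times> 'q) set \<Rightarrow> bool" where
  "functional Q I F \<Delta> \<longleftrightarrow>
     (\<forall>u m m'. (u, m) \<in> lang Q I F \<Delta> \<longrightarrow> (u, m') \<in> lang Q I F \<Delta> \<longrightarrow> m = m')"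

definition squared_output_automaton ::
  "'q set \<Rightarrow> ('q \<times> ('s option \<times> 'm::monoid_mult) \<times> 'q) set \<Rightarrow>
   (('q \<times> 'q) \<times> ('m \<times> 'm) \<times> ('q \<times> 'q)) set \<Rightarrow> bool" where
  "squared_output_automaton Q \<Delta> \<Delta>2 \<longleftrightarrow> finite \<Delta>2 \<and>
     \<Delta>2 \<subseteq> (Q \<times> Q) \<times> UNIV \<times> (Q \<times> Q) \<and>
     (\<forall>p1 p2 m n q1 q2.
        ((p1, p2), (m, n), (q1, q2)) \<in> trans_star2 (Q \<times> Q) \<Delta>2 \<longleftrightarrow>
        (\<exists>u. (p1, (u, m), q1) \<in> trans_star Q \<Delta> \<and> (p2, (u, n), q2) \<in> trans_star Q \<Delta>))"

definition on_successful_path ::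
  "'q set \<Rightarrow> 'q set \<Rightarrow> 'q set \<Rightarrow> (('q \<times> 'q) \<times> ('m::monoid_mult \<times> 'm) \<times> ('q \<times> 'q)) set \<Rightarrow> 'q \<times> 'q \<Rightarrow> bool" where
  "on_successful_path Q I F \<Delta>2 q \<longleftrightarrow>
     (\<exists>i\<in>I \<times> I. \<exists>f\<in>F \<times> F. \<exists>l l'. (i, l, q) \<in> trans_star2 (Q \<times> Q) \<Delta>2 \<and> (q, l', f) \<in> trans_star2 (Q \<times> Q) \<Delta>2)"

definition relevant_pair ::
  "'q set \<Rightarrow> 'q set \<Rightarrow> 'q set \<Rightarrow> (('q \<times> 'q) \<times> ('m::monoid_mult \<times> 'm) \<times> ('q \<times> 'q)) set \<Rightarrow> 'q \<times> 'q \<Rightarrow> 'm \<times> 'm \<Rightarrow> bool" where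
  "relevant_pair Q I F \<Delta>2 q mm \<longleftrightarrow> on_successful_path Q I F \<Delta>2 q \<and>
     (\<exists>i\<in>I \<times> I. (i, mm, q) \<in> trans_star2 (Q \<times> Q) \<Delta>2)"

definition accessible2 ::
  "'q set \<Rightarrow> 'q set \<Rightarrow> (('q \<times> 'q) \<times> ('m::monoid_mult \<times> 'm) \<times> ('q \<times> 'q)) set \<Rightarrow> 'q \<times> 'q \<Rightarrow> bool" where
  "accessible2 Q I \<Delta>2 q \<longleftrightarrow> (\<exists>i\<in>I \<times> I. \<exists>l. (i, l, q) \<in> trans_star2 (Q \<times> Q) \<Delta>2)"

definition valuation_rho ::
  "'q set \<Rightarrow> 'q set \<Rightarrow> 'q set \<Rightarrow> (('q \<times> 'q) \<times> ('m::monoid_mult \<times> 'm) \<times> ('q \<times> 'q)) set \<Rightarrow>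
   ('q \<times> 'q \<Rightarrow> ('m \<times> 'm) option) \<Rightarrow> bool" where
  "valuation_rho Q I F \<Delta>2 \<rho> \<longleftrightarrow>
     (\<forall>q. (\<exists>mm. relevant_pair Q I F \<Delta>2 q mm) \<longrightarrow>
          (\<exists>mm. \<rho> q = Some mm \<and> relevant_pair Q I F \<Delta>2 q mm)) \<and>
     (\<forall>q. \<not> (\<exists>mm. relevant_pair Q I F \<Delta>2 q mm) \<longrightarrow> \<rho> q = None) \<and>
     (\<forall>q \<in> I \<times> I. (\<exists>mm. relevant_pair Q I F \<Delta>2 q mm) \<longrightarrow> \<rho> q = Some (1, 1))"

definition valuation_nu ::
  "('m::monoid_mult \<times> 'm \<Rightarrow> 'm \<times> 'm) \<Rightarrow> ('q \<times> 'q \<Rightarrow> ('m \<times> 'm) option) \<Rightarrow> 'q \<times> 'q \<Rightarrow> ('m \<times> 'm) option" where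
  "valuation_nu \<eta> \<rho> q =
     (case \<rho> q of
        None \<Rightarrow> None
      | Some mm \<Rightarrow> (if fst mm = snd mm then Some (1, 1)
                    else if equalizable mm then Some (\<eta> mm) else None))"

end

theory Submission
  imports Defs
begin

text \<open>A transducer is functional iff every successful path of the squared output automaton
  carries a diagonal label. If so, any continuation of a relevant pair of a state p to a final
  state equalizes it; all relevant pairs of p share that equalizer and hence their mges, so the
  mge \<open>\<nu>(p)\<close> of the chosen pair \<open>\<rho>(p)\<close> serves for all of them, and at final states the empty
  continuation forces \<open>\<rho>(f)\<close> to be diagonal. Conversely, two outputs m, m' of one input give a
  relevant pair (m, m') of a final accessible state, whose mge is then (1, 1), so m = m'.\<close>

lemma mge_monoid_right_cancel:
  assumes "mge_monoid TYPE('m::monoid_mult)" and "a * c = b * (c::'m)"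
  shows "a = b"
  using assms unfolding mge_monoid_def right_cancel_def by blast

lemma mge_monoid_has_mge:
  assumes "mge_monoid TYPE('m::monoid_mult)" and "is_equalizer (mm::'m \<times> 'm) n"
  obtains v where "is_mge mm v"
  using assms unfolding mge_monoid_def equalizable_def by blast

lemma mge_monoid_left_cancel:
  assumes mge: "mge_monoid TYPE('m::monoid_mult)" and eq: "a * x = a * (y::'m)"
  shows "x = y"
proof -
  have one: "is_equalizer (a, a) (1, 1)"
    unfolding is_equalizer_def by simp
  then obtain x0 y0 where m0: "is_mge (a, a) (x0, y0)"
    by (metis mge_monoid_has_mge[OF mge] prod.collapse)
  from one obtain z where z: "x0 * z = 1" "y0 * z = 1"
    using m0 unfolding is_mge_def by (metis fst_conv snd_conv)
  \<comment> \<open>right cancellation makes z a two-sided inverse of both x0 and y0\<close>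
  have "z * x0 = 1" "z * y0 = 1"
    using z mge_monoid_right_cancel[OF mge, of "z * _" z 1] by (simp_all add: mult.assoc)
  then have "x0 = y0"
    by (metis z mult.assoc mult_1_left mult_1_right)
  moreover obtain t where "x = x0 * t" "y = y0 * t"
    using m0 eq unfolding is_mge_def is_equalizer_def by fastforce
  ultimately show ?thesis by simp
qed

lemma is_mge_diagonal:
  assumes "mge_monoid TYPE('m::monoid_mult)"
  shows "is_mge (a, a) (1, 1::'m)"
  using mge_monoid_left_cancel[OF assms, of a] unfolding is_mge_def is_equalizer_def by auto

lemma is_mge_equalizes_common_equalizer:
  assumes mge: "mge_monoid TYPE('m::monoid_mult)"
    and n: "is_equalizer mm n" "is_equalizer mm' (n::'m \<times> 'm)" and v: "is_mge mm v"
  shows "is_equalizer mm' v"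
proof -
  obtain z where "fst n = fst v * z" "snd n = snd v * z"
    using v n(1) unfolding is_mge_def by blast
  then have "(fst mm' * fst v) * z = (snd mm' * snd v) * z"
    using n(2) unfolding is_equalizer_def by (simp add: mult.assoc)
  then show ?thesis
    unfolding is_equalizer_def by (rule mge_monoid_right_cancel[OF mge])
qed

lemma is_mge_transfer_common_equalizer:
  assumes mge: "mge_monoid TYPE('m::monoid_mult)"
    and n: "is_equalizer mm n" "is_equalizer mm' (n::'m \<times> 'm)" and v: "is_mge mm v"
  shows "is_mge mm' v"
proof -
  obtain u where u: "is_mge mm' u"
    using mge_monoid_has_mge[OF mge n(2)] .
  have "is_equalizer mm u"
    using is_mge_equalizes_common_equalizer[OF mge n(2) n(1) u] .
  then obtain s where s: "fst u = fst v * s" "snd u = snd v * s"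
    using v unfolding is_mge_def by blast
  show ?thesis
    unfolding is_mge_def
  proof (intro conjI allI impI)
    show "is_equalizer mm' v"
      using is_mge_equalizes_common_equalizer[OF mge n v] .
  next
    fix yy assume "is_equalizer mm' yy"
    then obtain t where "fst yy = fst u * t" "snd yy = snd u * t"
      using u unfolding is_mge_def by blast
    then show "\<exists>x. fst yy = fst v * x \<and> snd yy = snd v * x"
      using s by (metis mult.assoc)
  qed
qed

lemma trans_star2_append:
  assumes "(q, (n1, n2), r) \<in> trans_star2 Q2 \<Delta>2"
  shows "(p, (m1, m2), q) \<in> trans_star2 Q2 \<Delta>2 \<Longrightarrow>
    (p, (m1 * n1, m2 * n2), r) \<in> trans_star2 Q2 \<Delta>2"
  using assms
proof (induction q n1 n2 r rule: trans_star2.induct)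
  case (refl q)
  then show ?case by simp
next
  case (step q n1 n2 r k1 k2 s)
  then show ?case
    using trans_star2.step[OF step.IH step.hyps(2)] by (simp add: mult.assoc)
qed

lemma trans_star2_target:
  assumes "(p, l, q) \<in> trans_star2 Q2 \<Delta>2" and "\<Delta>2 \<subseteq> Q2 \<times> UNIV \<times> Q2"
  shows "q \<in> Q2"
proof -
  obtain l1 l2 where "(p, (l1, l2), q) \<in> trans_star2 Q2 \<Delta>2"
    using assms(1) by (cases l) simp
  then show ?thesis
    using assms(2) by (induction p l1 l2 q rule: trans_star2.induct) auto
qed

definition successful_outputs_agree ::
  "'q set \<Rightarrow> 'q set \<Rightarrow> 'q set \<Rightarrow> (('q \<times> 'q) \<times> ('m::monoid_mult \<times> 'm) \<times> ('q \<times> 'q)) set \<Rightarrow> bool" where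
  "successful_outputs_agree Q I F \<Delta>2 \<longleftrightarrow>
     (\<forall>i\<in>I \<times> I. \<forall>f\<in>F \<times> F. \<forall>m m'. (i, (m, m'), f) \<in> trans_star2 (Q \<times> Q) \<Delta>2 \<longrightarrow> m = m')"

lemma functional_iff_successful_outputs_agree:
  assumes "squared_output_automaton Q \<Delta> \<Delta>2"
  shows "functional Q I F \<Delta> \<longleftrightarrow> successful_outputs_agree Q I F \<Delta>2"
  using assms
  unfolding functional_def successful_outputs_agree_def lang_def squared_output_automaton_def
  by fast

lemma relevant_pair_equalized_by_continuation:
  assumes "successful_outputs_agree Q I F \<Delta>2" and "relevant_pair Q I F \<Delta>2 p mm"
    and "(p, n, f) \<in> trans_star2 (Q \<times> Q) \<Delta>2" and "f \<in> F \<times> F"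
  shows "is_equalizer mm n"
proof -
  obtain i where "i \<in> I \<times> I" "(i, (fst mm, snd mm), p) \<in> trans_star2 (Q \<times> Q) \<Delta>2"
    using assms(2) unfolding relevant_pair_def by auto
  moreover have "(p, (fst n, snd n), f) \<in> trans_star2 (Q \<times> Q) \<Delta>2"
    using assms(3) by simp
  ultimately have "(i, (fst mm * fst n, snd mm * snd n), f) \<in> trans_star2 (Q \<times> Q) \<Delta>2"
    by (simp add: trans_star2_append)
  then show ?thesis
    using assms(1,4) \<open>i \<in> I \<times> I\<close>
    unfolding successful_outputs_agree_def is_equalizer_def by blast
qed

lemma relevant_pair_of_final:
  assumes "\<Delta>2 \<subseteq> (Q \<times> Q) \<times> UNIV \<times> (Q \<times> Q)" and "i \<in> I \<times> I" and "f \<in> F \<times> F"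
    and "(i, l, f) \<in> trans_star2 (Q \<times> Q) \<Delta>2"
  shows "relevant_pair Q I F \<Delta>2 f l"
  using assms trans_star2.refl[OF trans_star2_target[OF assms(4,1)]]
  unfolding relevant_pair_def on_successful_path_def by blast

lemma valuation_rho_relevant:
  assumes "valuation_rho Q I F \<Delta>2 \<rho>" and "relevant_pair Q I F \<Delta>2 q mm"
  obtains ab where "\<rho> q = Some ab" and "relevant_pair Q I F \<Delta>2 q ab"
  using assms unfolding valuation_rho_def by blast

lemma valuation_nu_mge:
  assumes "mge_monoid TYPE('m::monoid_mult)"
    and eta: "\<And>mm. equalizable mm \<Longrightarrow> is_mge mm (\<eta> mm)"
    and "\<rho> q = Some ab" and "equalizable (ab::'m \<times> 'm)"
  shows "\<exists>v. valuation_nu \<eta> \<rho> q = Some v \<and> is_mge ab v"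
proof (cases "fst ab = snd ab")
  case True
  then have "is_mge ab (1, 1)"
    using is_mge_diagonal[OF assms(1), of "fst ab"] by (metis prod.collapse)
  then show ?thesis
    using True assms(3) unfolding valuation_nu_def by simp
next
  case False
  then show ?thesis
    using eta assms(3,4) unfolding valuation_nu_def by simp
qed

lemma valuation_nu_diagonal:
  assumes "\<rho> q = Some (a, a)"
  shows "valuation_nu \<eta> \<rho> q = Some (1, 1)"
  using assms unfolding valuation_nu_def by simp

lemma successful_outputs_agree_imp_nu_mge:
  assumes mge: "mge_monoid TYPE('m::monoid_mult)"
    and eta: "\<And>mm. equalizable mm \<Longrightarrow> is_mge mm (\<eta> mm)"
    and rho: "valuation_rho Q I F \<Delta>2 \<rho>"
    and agree: "successful_outputs_agree Q I F \<Delta>2"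
    and rel: "relevant_pair Q I F \<Delta>2 p (mm::'m \<times> 'm)"
  shows "\<exists>v. valuation_nu \<eta> \<rho> p = Some v \<and> is_mge mm v"
proof -
  obtain ab where ab: "\<rho> p = Some ab" "relevant_pair Q I F \<Delta>2 p ab"
    using valuation_rho_relevant[OF rho rel] .
  obtain n f where f: "f \<in> F \<times> F" "(p, n, f) \<in> trans_star2 (Q \<times> Q) \<Delta>2"
    using rel unfolding relevant_pair_def on_successful_path_def by blast
  have "is_equalizer ab n" "is_equalizer mm n"
    using relevant_pair_equalized_by_continuation[OF agree _ f(2,1)] ab(2) rel by blast+
  moreover have "equalizable ab"
    using \<open>is_equalizer ab n\<close> unfolding equalizable_def by blast
  then obtain v where "valuation_nu \<eta> \<rho> p = Some v" "is_mge ab v"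
    using valuation_nu_mge[OF mge] eta ab(1) by blast
  ultimately show ?thesis
    using is_mge_transfer_common_equalizer[OF mge] by blast
qed

lemma successful_outputs_agree_imp_nu_final:
  assumes sq: "squared_output_automaton Q \<Delta> \<Delta>2"
    and rho: "valuation_rho Q I F \<Delta>2 \<rho>"
    and agree: "successful_outputs_agree Q I F \<Delta>2"
    and f: "f \<in> F \<times> F" and acc: "accessible2 Q I \<Delta>2 f"
  shows "valuation_nu \<eta> \<rho> f = Some (1, 1)"
proof -
  have \<Delta>2: "\<Delta>2 \<subseteq> (Q \<times> Q) \<times> UNIV \<times> (Q \<times> Q)"
    using sq unfolding squared_output_automaton_def by blast
  obtain i l where il: "i \<in> I \<times> I" "(i, l, f) \<in> trans_star2 (Q \<times> Q) \<Delta>2"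
    using acc unfolding accessible2_def by blast
  obtain ab where ab: "\<rho> f = Some ab" "relevant_pair Q I F \<Delta>2 f ab"
    using valuation_rho_relevant[OF rho relevant_pair_of_final[OF \<Delta>2 il(1) f il(2)]] .
  have "(f, (1, 1), f) \<in> trans_star2 (Q \<times> Q) \<Delta>2"
    using trans_star2.refl trans_star2_target[OF il(2) \<Delta>2] .
  then have "is_equalizer ab (1, 1)"
    using relevant_pair_equalized_by_continuation[OF agree ab(2) _ f] by blast
  then show ?thesis
    using valuation_nu_diagonal[of \<rho> f] ab(1) unfolding is_equalizer_def by (cases ab) simp
qed

lemma nu_conditions_imp_successful_outputs_agree:
  assumes sq: "squared_output_automaton Q \<Delta> \<Delta>2"
    and nu_mge: "\<forall>p mm. relevant_pair Q I F \<Delta>2 p mm \<longrightarrow>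
        (\<exists>v. valuation_nu \<eta> \<rho> p = Some v \<and> is_mge mm v)"
    and nu_final: "\<forall>f \<in> F \<times> F. accessible2 Q I \<Delta>2 f \<longrightarrow> valuation_nu \<eta> \<rho> f = Some (1, 1)"
  shows "successful_outputs_agree Q I F \<Delta>2"
  unfolding successful_outputs_agree_def
proof (intro ballI allI impI)
  fix i f m m'
  assume i: "i \<in> I \<times> I" and f: "f \<in> F \<times> F"
    and path: "(i, (m, m'), f) \<in> trans_star2 (Q \<times> Q) \<Delta>2"
  have "\<Delta>2 \<subseteq> (Q \<times> Q) \<times> UNIV \<times> (Q \<times> Q)"
    using sq unfolding squared_output_automaton_def by blast
  then have "relevant_pair Q I F \<Delta>2 f (m, m')"
    using relevant_pair_of_final i f path by blast
  moreover have "accessible2 Q I \<Delta>2 f"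
    using i path unfolding accessible2_def by blast
  ultimately have "is_mge (m, m') (1, 1)"
    using nu_mge nu_final f by fastforce
  then show "m = m'"
    unfolding is_mge_def is_equalizer_def by simp
qed

theorem lemma7:
  fixes Q I F :: "'q set"
    and \<Delta> :: "('q \<times> ('s option \<times> 'm::monoid_mult) \<times> 'q) set"
    and \<Delta>2 :: "(('q \<times> 'q) \<times> ('m \<times> 'm) \<times> ('q \<times> 'q)) set"
    and \<eta> :: "'m \<times> 'm \<Rightarrow> 'm \<times> 'm"
    and \<rho> :: "'q \<times> 'q \<Rightarrow> ('m \<times> 'm) option"
  assumes mge: "mge_monoid TYPE('m)"
    and eta: "\<And>mm. equalizable mm \<Longrightarrow> is_mge mm (\<eta> mm)"
    and fst: "monoidal_fst Q I F \<Delta>"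
    and trim: "trimmed Q I F \<Delta>"
    and sq: "squared_output_automaton Q \<Delta> \<Delta>2"
    and rho: "valuation_rho Q I F \<Delta>2 \<rho>"
  shows "functional Q I F \<Delta> \<longleftrightarrow>
    ((\<forall>p mm. relevant_pair Q I F \<Delta>2 p mm \<longrightarrow>
        (\<exists>v. valuation_nu \<eta> \<rho> p = Some v \<and> is_mge mm v)) \<and>
     (\<forall>f \<in> F \<times> F. accessible2 Q I \<Delta>2 f \<longrightarrow> valuation_nu \<eta> \<rho> f = Some (1, 1)))"
  unfolding functional_iff_successful_outputs_agree[OF sq]
  using successful_outputs_agree_imp_nu_mge[OF mge eta rho]
    successful_outputs_agree_imp_nu_final[OF sq rho]
    nu_conditions_imp_successful_outputs_agree[OF sq]
  by blast

end
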